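(* Let $\langle A,\Omega,\mu,u_S,u_R\rangle$ be a normal form cheap talk game with $|\Omega|=n$. For any value $v$ such that some cheap talk equilibrium yields expected receiver's utility $v$, there exists a cheap talk equilibrium $(\pi,s)$ with $|\mathrm{supp}(\pi)|\le n+1$ whose expected receiver's utility is $v$.
   Context: A normal form cheap talk game $\langle A,\Omega,\mu,u_S,u_R\rangle$ consists of a finite action set $A$, a finite state set $\Omega$ of size $n$, a prior $\mu\in\Delta(\Omega)$, and utilities $u_S,u_R:\Omega\times A\to\mathbb{R}$. The sender observes $\omega\sim\mu$ and sends a signal from a discrete set $\Sigma$ ($|\Sigma|\ge n+1$) via $\pi:\Omega\to\Delta(\Sigma)$; the receiver acts via $s:\Sigma\to\Delta(A)$. $\mathrm{supp}(\pi)$ is the set of signals sent with positive probability; for $\sigma\in\mathrm{supp}(\pi)$, $p_\sigma$ is the Bayesian posterior. $(\pi,s)$ is a cheap talk equilibrium if (i) for every $\omega$, each signal sent with positive probability in $\omega$ maximizes $\mathbb{E}_{a\sim s[\sigma]}u_S(\omega,a)$ over $\sigma\in\mathrm{supp}(\pi)$; (ii) for every $\sigma\in\mathrm{supp}(\pi)$, $s[\sigma]$ is supported on maximizers of $\sum_\omega p_\sigma(\omega)u_R(\omega,a)$. Expected receiver's utility is $\mathbb{E}_{\omega\sim\mu,\sigma\sim\pi[\omega],a\sim s[\sigma]}u_R(\omega,a)$. *)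

theory Defs
  imports "HOL-Probability.Probability"
begin

definition supp_sig :: "'w pmf \<Rightarrow> ('w \<Rightarrow> 'sig pmf) \<Rightarrow> 'sig set" where
  "supp_sig \<mu> \<pi> = {\<sigma>. \<exists>\<omega>\<in>set_pmf \<mu>. \<sigma> \<in> set_pmf (\<pi> \<omega>)}"

definition posterior :: "'w::finite pmf \<Rightarrow> ('w \<Rightarrow> 'sig pmf) \<Rightarrow> 'sig \<Rightarrow> 'w \<Rightarrow> real" where
  "posterior \<mu> \<pi> \<sigma> \<omega> =
     pmf \<mu> \<omega> * pmf (\<pi> \<omega>) \<sigma> / (\<Sum>\<omega>'\<in>UNIV. pmf \<mu> \<omega>' * pmf (\<pi> \<omega>') \<sigma>)"

definition sender_util :: "('w \<Rightarrow> 'a \<Rightarrow> real) \<Rightarrow> ('sig \<Rightarrow> 'a pmf) \<Rightarrow> 'w \<Rightarrow> 'sig \<Rightarrow> real" where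
  "sender_util uS s \<omega> \<sigma> = measure_pmf.expectation (s \<sigma>) (\<lambda>a. uS \<omega> a)"

definition cheap_talk_eq ::
  "'w::finite pmf \<Rightarrow> ('w \<Rightarrow> 'a::finite \<Rightarrow> real) \<Rightarrow> ('w \<Rightarrow> 'a \<Rightarrow> real)
   \<Rightarrow> ('w \<Rightarrow> 'sig pmf) \<Rightarrow> ('sig \<Rightarrow> 'a pmf) \<Rightarrow> bool" where
  "cheap_talk_eq \<mu> uS uR \<pi> s \<longleftrightarrow>
     (\<forall>\<omega> \<sigma>. \<sigma> \<in> set_pmf (\<pi> \<omega>) \<longrightarrow>
        (\<forall>\<sigma>'\<in>supp_sig \<mu> \<pi>. sender_util uS s \<omega> \<sigma>' \<le> sender_util uS s \<omega> \<sigma>)) \<and>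
     (\<forall>\<sigma>\<in>supp_sig \<mu> \<pi>. \<forall>a\<in>set_pmf (s \<sigma>). \<forall>a'.
        (\<Sum>\<omega>\<in>UNIV. posterior \<mu> \<pi> \<sigma> \<omega> * uR \<omega> a') \<le>
        (\<Sum>\<omega>\<in>UNIV. posterior \<mu> \<pi> \<sigma> \<omega> * uR \<omega> a))"

definition receiver_utility ::
  "'w pmf \<Rightarrow> ('w \<Rightarrow> 'a \<Rightarrow> real) \<Rightarrow> ('w \<Rightarrow> 'sig pmf) \<Rightarrow> ('sig \<Rightarrow> 'a pmf) \<Rightarrow> real" where
  "receiver_utility \<mu> uR \<pi> s =
     measure_pmf.expectation
       (bind_pmf \<mu> (\<lambda>\<omega>. bind_pmf (\<pi> \<omega>) (\<lambda>\<sigma>. map_pmf (\<lambda>a. (\<omega>, a)) (s \<sigma>))))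
       (\<lambda>(\<omega>, a). uR \<omega> a)"

end

theory Submission
  imports Defs
begin

text \<open>Every signal sent in an equilibrium determines a belief point: the posterior it induces,
  paired with the receiver's expected payoff at that posterior.  Averaged over the distribution of
  signals these points give the prior paired with the equilibrium value \<open>v\<close>.  Although the signal
  distribution may have infinite support, this average still lies in the convex hull of the belief
  points, and all of them lie in the \<open>n\<close>-dimensional hyperplane of probability vectors, so by
  Caratheodory's theorem it is a convex combination of at most \<open>n + 1\<close> of them.  Splitting the
  prior according to these weights gives a sender strategy that uses only these signals and induces
  the same posteriors, so the receiver's strategy stays optimal; the sender's incentive constraints
  are inherited, because every signal still in use was optimal before.\<close>

section \<open>Barycentres of bounded functions under a pmf\<close>

lemma pmf_integrable_bounded:
  fixes \<phi> :: "'b \<Rightarrow> real"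
  assumes "\<And>\<sigma>. \<sigma> \<in> set_pmf P \<Longrightarrow> \<bar>\<phi> \<sigma>\<bar> \<le> C"
  shows "integrable (measure_pmf P) \<phi>"
  by (intro measure_pmf.integrable_const_bound[where B=C]) (auto simp: AE_measure_pmf_iff assms)

lemma pmf_integrable_finite_support:
  fixes \<phi> :: "'b \<Rightarrow> real"
  assumes "finite G" "\<And>\<sigma>. \<sigma> \<notin> G \<Longrightarrow> \<phi> \<sigma> = 0"
  shows "integrable (measure_pmf P) \<phi>"
proof (rule pmf_integrable_bounded)
  fix \<sigma>
  show "\<bar>\<phi> \<sigma>\<bar> \<le> (\<Sum>\<sigma>\<in>G. \<bar>\<phi> \<sigma>\<bar>)"
  proof (cases "\<sigma> \<in> G")
    case True
    then show ?thesis
      using assms(1) by (intro member_le_sum) auto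
  qed (simp add: assms(2) sum_nonneg)
qed

lemma convex_hull_image_weights:
  fixes f :: "'b \<Rightarrow> 'e::euclidean_space"
  assumes "x \<in> convex hull (f ` S)"
  obtains T w where "finite T" "T \<subseteq> S" "int (card T) \<le> aff_dim (f ` S) + 1"
    "\<forall>\<sigma>\<in>T. 0 \<le> w \<sigma>" "sum w T = 1" "(\<Sum>\<sigma>\<in>T. w \<sigma> *\<^sub>R f \<sigma>) = x"
proof -
  obtain V u where V: "finite V" "V \<subseteq> f ` S" "int (card V) \<le> aff_dim (f ` S) + 1"
    "\<forall>y\<in>V. 0 \<le> u y" "sum u V = 1" "(\<Sum>y\<in>V. u y *\<^sub>R y) = x"
    using assms unfolding convex_hull_caratheodory_aff_dim by blast
  define T where "T = inv_into S f ` V"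
  have f_inv: "f (inv_into S f y) = y" if "y \<in> V" for y
    using that V(2) by (auto intro: f_inv_into_f)
  have "inj_on (inv_into S f) V"
    by (metis f_inv inj_onI)
  then have card_T: "card T = card V"
    by (simp add: T_def card_image)
  have inj: "inj_on f T"
    by (auto simp: T_def inj_on_def f_inv)
  have img: "f ` T = V"
    by (force simp: T_def image_image f_inv)
  show ?thesis
  proof
    show "finite T" "T \<subseteq> S"
      using V(1,2) by (auto simp: T_def inv_into_into)
    show "int (card T) \<le> aff_dim (f ` S) + 1"
      using V(3) card_T by simp
    show "\<forall>\<sigma>\<in>T. 0 \<le> (u \<circ> f) \<sigma>"
      using V(4) img by auto
    show "sum (u \<circ> f) T = 1" "(\<Sum>\<sigma>\<in>T. (u \<circ> f) \<sigma> *\<^sub>R f \<sigma>) = x"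
      using V(5,6) sum.reindex[OF inj, of u] sum.reindex[OF inj, of "\<lambda>y. u y *\<^sub>R y"]
      by (simp_all add: img o_def)
  qed
qed

lemma expectation_reweighted:
  fixes \<phi> w :: "'b \<Rightarrow> real"
  assumes "finite G" "G \<subseteq> set_pmf P"
  shows "measure_pmf.expectation P (\<lambda>\<sigma>. (if \<sigma> \<in> G then w \<sigma> / pmf P \<sigma> else 0) * \<phi> \<sigma>)
         = (\<Sum>\<sigma>\<in>G. w \<sigma> * \<phi> \<sigma>)"
proof -
  have "measure_pmf.expectation P (\<lambda>\<sigma>. (if \<sigma> \<in> G then w \<sigma> / pmf P \<sigma> else 0) * \<phi> \<sigma>)
        = (\<Sum>\<sigma>\<in>G. (w \<sigma> / pmf P \<sigma>) * \<phi> \<sigma> * pmf P \<sigma>)"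
    using assms(1) by (subst integral_measure_pmf_real[where A=G]) (auto split: if_splits intro!: sum.cong)
  also have "\<dots> = (\<Sum>\<sigma>\<in>G. w \<sigma> * \<phi> \<sigma>)"
    using assms(2) by (intro sum.cong) (auto simp: set_pmf_iff)
  finally show ?thesis .
qed

lemma weighted_barycentre_in_closure_convex_hull:
  fixes f :: "'b \<Rightarrow> 'e::euclidean_space" and g :: "'b \<Rightarrow> real"
  assumes f_bounded: "\<And>\<sigma>. \<sigma> \<in> set_pmf P \<Longrightarrow> norm (f \<sigma>) \<le> B"
    and g_nonneg: "\<And>\<sigma>. \<sigma> \<in> set_pmf P \<Longrightarrow> 0 \<le> g \<sigma>"
    and g_bounded: "\<And>\<sigma>. \<sigma> \<in> set_pmf P \<Longrightarrow> g \<sigma> \<le> C"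
    and g_mass: "measure_pmf.expectation P g = 1"
    and barycentre: "\<And>a. inner a x = measure_pmf.expectation P (\<lambda>\<sigma>. g \<sigma> * inner a (f \<sigma>))"
  shows "x \<in> closure (convex hull (f ` set_pmf P))"
proof (rule ccontr)
  let ?K = "closure (convex hull (f ` set_pmf P))"
  assume "x \<notin> ?K"
  then obtain a b where ab: "inner a x < b" "\<forall>z\<in>?K. b < inner a z"
    using separating_hyperplane_closed_point[OF convex_closure[OF convex_convex_hull] closed_closure]
    by blast
  have sep: "b < inner a (f \<sigma>)" if "\<sigma> \<in> set_pmf P" for \<sigma>
    using ab(2) closure_subset[THEN subsetD, OF hull_inc] that by blast
  have inner_bounded: "\<bar>inner a (f \<sigma>)\<bar> \<le> norm a * B" if "\<sigma> \<in> set_pmf P" for \<sigma>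
    using Cauchy_Schwarz_ineq2[of a "f \<sigma>"] f_bounded[OF that]
    by (meson mult_left_mono norm_ge_zero order_trans)
  have int_f: "integrable (measure_pmf P) (\<lambda>\<sigma>. g \<sigma> * inner a (f \<sigma>))"
  proof (rule pmf_integrable_bounded)
    fix \<sigma> assume "\<sigma> \<in> set_pmf P"
    then have "0 \<le> g \<sigma>" "g \<sigma> \<le> C" "\<bar>inner a (f \<sigma>)\<bar> \<le> norm a * B"
      using g_nonneg g_bounded inner_bounded by auto
    then show "\<bar>g \<sigma> * inner a (f \<sigma>)\<bar> \<le> C * (norm a * B)"
      unfolding abs_mult by (intro mult_mono) auto
  qed
  have int_b: "integrable (measure_pmf P) (\<lambda>\<sigma>. g \<sigma> * b)"
  proof (rule pmf_integrable_bounded)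
    fix \<sigma> assume "\<sigma> \<in> set_pmf P"
    then show "\<bar>g \<sigma> * b\<bar> \<le> C * \<bar>b\<bar>"
      unfolding abs_mult using g_nonneg g_bounded by (intro mult_right_mono) auto
  qed
  have "b = measure_pmf.expectation P (\<lambda>\<sigma>. g \<sigma> * b)"
    using g_mass by simp
  also have "\<dots> \<le> inner a x"
    unfolding barycentre using int_b int_f g_nonneg sep
    by (intro integral_mono_AE) (auto simp: AE_measure_pmf_iff less_imp_le mult_left_mono)
  finally show False
    using ab(1) by simp
qed

lemma pmf_uniform_lower_bound:
  assumes "finite G" "G \<subseteq> set_pmf P"
  obtains \<epsilon> :: real where "0 < \<epsilon>" "\<epsilon> \<le> 1/2" "\<And>\<sigma>. \<sigma> \<in> G \<Longrightarrow> \<epsilon> \<le> pmf P \<sigma>"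
proof
  let ?\<epsilon> = "Min (insert (1/2) (pmf P ` G))"
  show "0 < ?\<epsilon>"
    using assms by (simp add: Min_gr_iff pmf_positive subset_iff)
  show "?\<epsilon> \<le> 1/2"
    using assms(1) by (intro Min_le) auto
  show "?\<epsilon> \<le> pmf P \<sigma>" if "\<sigma> \<in> G" for \<sigma>
    using assms(1) that by (intro Min_le) auto
qed

text \<open>Removing the mass \<open>\<epsilon> w \<sigma>\<close> from each atom \<open>\<sigma> \<in> G\<close> and renormalising leaves a probability
  density \<open>g\<close>; its barycentre lies in the closure of the hull.\<close>

lemma barycentre_remove_mass_in_closure:
  fixes f :: "'b \<Rightarrow> 'e::euclidean_space"
  assumes f_bounded: "\<And>\<sigma>. \<sigma> \<in> set_pmf P \<Longrightarrow> norm (f \<sigma>) \<le> B"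
    and barycentre: "\<And>a. inner a x = measure_pmf.expectation P (\<lambda>\<sigma>. inner a (f \<sigma>))"
    and G: "finite G" "G \<subseteq> set_pmf P" and w: "\<forall>\<sigma>\<in>G. 0 \<le> w \<sigma>" "sum w G = 1"
    and \<epsilon>: "0 < \<epsilon>" "\<epsilon> \<le> 1/2" "\<And>\<sigma>. \<sigma> \<in> G \<Longrightarrow> \<epsilon> \<le> pmf P \<sigma>"
  shows "(1 / (1 - \<epsilon>)) *\<^sub>R (x - \<epsilon> *\<^sub>R (\<Sum>\<sigma>\<in>G. w \<sigma> *\<^sub>R f \<sigma>))
         \<in> closure (convex hull (f ` set_pmf P))"
proof (rule weighted_barycentre_in_closure_convex_hull[OF f_bounded])
  define h where "h \<sigma> = (if \<sigma> \<in> G then w \<sigma> / pmf P \<sigma> else 0)" for \<sigma>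
  define g where "g \<sigma> = (1 - \<epsilon> * h \<sigma>) / (1 - \<epsilon>)" for \<sigma>
  have \<epsilon>h: "0 \<le> \<epsilon> * h \<sigma> \<and> \<epsilon> * h \<sigma> \<le> 1" for \<sigma>
  proof (cases "\<sigma> \<in> G")
    case True
    then have "0 < pmf P \<sigma>"
      using G(2) by (simp add: pmf_positive subset_iff)
    have "\<epsilon> * h \<sigma> \<le> pmf P \<sigma> * h \<sigma>"
      using \<epsilon>(3)[OF True] w(1) True by (intro mult_right_mono) (auto simp: h_def)
    also have "\<dots> = w \<sigma>"
      using \<open>0 < pmf P \<sigma>\<close> True by (simp add: h_def)
    also have "\<dots> \<le> 1"
      using w(1) by (intro sum_nonneg_leq_bound[OF G(1) _ w(2) True]) auto
    finally show ?thesis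
      using True w(1) \<epsilon>(1) \<open>0 < pmf P \<sigma>\<close> by (simp add: h_def)
  qed (simp add: h_def)
  have E_g: "measure_pmf.expectation P (\<lambda>\<sigma>. g \<sigma> * \<phi> \<sigma>)
      = (measure_pmf.expectation P \<phi> - \<epsilon> * (\<Sum>\<sigma>\<in>G. w \<sigma> * \<phi> \<sigma>)) / (1 - \<epsilon>)"
    if "integrable (measure_pmf P) \<phi>" for \<phi>
  proof -
    have "integrable (measure_pmf P) (\<lambda>\<sigma>. h \<sigma> * \<phi> \<sigma>)"
      using G(1) by (intro pmf_integrable_finite_support[of G]) (simp_all add: h_def)
    then have "measure_pmf.expectation P (\<lambda>\<sigma>. g \<sigma> * \<phi> \<sigma>)
        = (measure_pmf.expectation P \<phi> - \<epsilon> * measure_pmf.expectation P (\<lambda>\<sigma>. h \<sigma> * \<phi> \<sigma>)) / (1 - \<epsilon>)"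
      using that by (simp add: g_def diff_divide_distrib left_diff_distrib mult.assoc)
    then show ?thesis
      using expectation_reweighted[OF G, of w \<phi>] by (simp add: h_def)
  qed
  show "0 \<le> g \<sigma>" "g \<sigma> \<le> 1 / (1 - \<epsilon>)" for \<sigma>
    using \<epsilon>h[of \<sigma>] \<epsilon>(2) by (auto simp: g_def divide_right_mono)
  show "measure_pmf.expectation P g = 1"
    using E_g[of "\<lambda>_. 1"] w(2) \<epsilon>(2) by simp
  show "inner a ((1 / (1 - \<epsilon>)) *\<^sub>R (x - \<epsilon> *\<^sub>R (\<Sum>\<sigma>\<in>G. w \<sigma> *\<^sub>R f \<sigma>)))
        = measure_pmf.expectation P (\<lambda>\<sigma>. g \<sigma> * inner a (f \<sigma>))" for a
  proof -
    have "integrable (measure_pmf P) (\<lambda>\<sigma>. inner a (f \<sigma>))"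
      using Cauchy_Schwarz_ineq2[of a] f_bounded
      by (intro pmf_integrable_bounded[where C="norm a * B"]) (meson mult_left_mono norm_ge_zero order_trans)
    then show ?thesis
      using E_g by (simp add: barycentre inner_diff_right inner_sum_right)
  qed
qed

text \<open>A point \<open>c\<close> of the relative interior is a finite convex combination of image points;
  \<open>x\<close> lies on the segment from \<open>c\<close> to the barycentre \<open>y\<close> obtained by removing a little mass
  at these points, hence in the relative interior.\<close>

lemma barycentre_in_convex_hull:
  fixes f :: "'b \<Rightarrow> 'e::euclidean_space"
  assumes f_bounded: "\<And>\<sigma>. \<sigma> \<in> set_pmf P \<Longrightarrow> norm (f \<sigma>) \<le> B"
    and barycentre: "\<And>a. inner a x = measure_pmf.expectation P (\<lambda>\<sigma>. inner a (f \<sigma>))"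
  shows "x \<in> convex hull (f ` set_pmf P)"
proof -
  let ?K = "convex hull (f ` set_pmf P)"
  have "rel_interior ?K \<noteq> {}"
    using set_pmf_not_empty by (simp add: rel_interior_eq_empty)
  then obtain c where c: "c \<in> rel_interior ?K"
    by blast
  then have "c \<in> ?K"
    using rel_interior_subset by blast
  then obtain G w where G: "finite G" "G \<subseteq> set_pmf P" and w: "\<forall>\<sigma>\<in>G. 0 \<le> w \<sigma>" "sum w G = 1"
    and c_eq: "(\<Sum>\<sigma>\<in>G. w \<sigma> *\<^sub>R f \<sigma>) = c"
    by (rule convex_hull_image_weights)
  obtain \<epsilon> :: real where \<epsilon>: "0 < \<epsilon>" "\<epsilon> \<le> 1/2" "\<And>\<sigma>. \<sigma> \<in> G \<Longrightarrow> \<epsilon> \<le> pmf P \<sigma>"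
    using pmf_uniform_lower_bound[OF G] by blast
  define y where "y = (1 / (1 - \<epsilon>)) *\<^sub>R (x - \<epsilon> *\<^sub>R c)"
  have "y \<in> closure ?K"
    unfolding y_def c_eq[symmetric]
    using barycentre_remove_mass_in_closure[OF f_bounded barycentre G w \<epsilon>] .
  moreover have "x = y - \<epsilon> *\<^sub>R (y - c)"
  proof -
    have "(1 - \<epsilon>) *\<^sub>R y = x - \<epsilon> *\<^sub>R c"
      using \<epsilon>(2) by (simp add: y_def)
    moreover have "y - \<epsilon> *\<^sub>R (y - c) = (1 - \<epsilon>) *\<^sub>R y + \<epsilon> *\<^sub>R c"
      by (simp add: algebra_simps)
    ultimately show ?thesis
      by simp
  qed
  ultimately have "x \<in> rel_interior ?K"
    using rel_interior_closure_convex_shrink[OF convex_convex_hull c _ \<epsilon>(1)] \<epsilon>(2) by simp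
  then show ?thesis
    using rel_interior_subset by blast
qed

section \<open>Posteriors and receiver payoffs\<close>

lemma expectation_finite_UNIV:
  fixes h :: "'w::finite \<Rightarrow> real"
  shows "measure_pmf.expectation \<mu> h = (\<Sum>\<omega>\<in>UNIV. pmf \<mu> \<omega> * h \<omega>)"
  by (subst integral_measure_pmf_real[where A=UNIV]) (auto simp: mult.commute)

lemma expectation_eq_count_space:
  fixes h :: "'b \<Rightarrow> real"
  shows "measure_pmf.expectation P h = integral\<^sup>L (count_space UNIV) (\<lambda>x. pmf P x * h x)"
  unfolding measure_pmf_eq_density by (subst integral_density) auto

lemma abs_expectation_le:
  fixes h :: "'b \<Rightarrow> real"
  assumes "\<And>x. \<bar>h x\<bar> \<le> C"
  shows "\<bar>measure_pmf.expectation P h\<bar> \<le> C"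
proof -
  have "integrable (measure_pmf P) (\<lambda>x. \<bar>h x\<bar>)"
    using assms by (intro pmf_integrable_bounded) auto
  then have "measure_pmf.expectation P (\<lambda>x. \<bar>h x\<bar>) \<le> C"
    using assms by (intro measure_pmf.integral_le_const) auto
  then show ?thesis
    using integral_abs_bound[of "measure_pmf P" h] by linarith
qed

lemma expectation_bind_pmf_bounded:
  fixes f :: "'b \<Rightarrow> real"
  assumes "\<And>x. \<bar>f x\<bar> \<le> B"
  shows "measure_pmf.expectation (bind_pmf M N) f
         = measure_pmf.expectation M (\<lambda>x. measure_pmf.expectation (N x) f)"
  unfolding measure_pmf_bind
  by (rule integral_bind[where K="count_space UNIV" and B=B and B'=1])
     (use assms in \<open>auto simp: measure_pmf_in_subprob_algebra\<close>)

lemma pmf_bind_pmf_finite: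
  fixes \<mu> :: "'w::finite pmf"
  shows "pmf (bind_pmf \<mu> \<pi>) \<sigma> = (\<Sum>\<omega>\<in>UNIV. pmf \<mu> \<omega> * pmf (\<pi> \<omega>) \<sigma>)"
  by (simp add: pmf_bind expectation_finite_UNIV)

lemma supp_sig_eq_set_bind_pmf: "supp_sig \<mu> \<pi> = set_pmf (bind_pmf \<mu> \<pi>)"
  by (auto simp: supp_sig_def)

lemma posterior_eq_pmf_bind:
  "posterior \<mu> \<pi> \<sigma> \<omega> = pmf \<mu> \<omega> * pmf (\<pi> \<omega>) \<sigma> / pmf (bind_pmf \<mu> \<pi>) \<sigma>"
  by (simp add: posterior_def pmf_bind_pmf_finite)

lemma joint_le_pmf_bind: "pmf \<mu> \<omega> * pmf (\<pi> \<omega>) \<sigma> \<le> pmf (bind_pmf \<mu> \<pi>) \<sigma>"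
  for \<mu> :: "'w::finite pmf"
  unfolding pmf_bind_pmf_finite by (rule member_le_sum) auto

lemma posterior_nonneg: "0 \<le> posterior \<mu> \<pi> \<sigma> \<omega>"
  by (simp add: posterior_eq_pmf_bind)

lemma posterior_le_1: "posterior \<mu> \<pi> \<sigma> \<omega> \<le> 1"
  unfolding posterior_eq_pmf_bind using joint_le_pmf_bind[of \<mu> \<omega> \<pi> \<sigma>]
  by (cases "pmf (bind_pmf \<mu> \<pi>) \<sigma> = 0") (simp_all add: divide_le_eq_1)

lemma pmf_bind_mult_posterior:
  "pmf (bind_pmf \<mu> \<pi>) \<sigma> * posterior \<mu> \<pi> \<sigma> \<omega> = pmf \<mu> \<omega> * pmf (\<pi> \<omega>) \<sigma>"
proof (cases "pmf (bind_pmf \<mu> \<pi>) \<sigma> = 0")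
  case True
  moreover have "0 \<le> pmf \<mu> \<omega> * pmf (\<pi> \<omega>) \<sigma>"
    by simp
  ultimately have "pmf \<mu> \<omega> * pmf (\<pi> \<omega>) \<sigma> = 0"
    using joint_le_pmf_bind[of \<mu> \<omega> \<pi> \<sigma>] by linarith
  with True show ?thesis
    by simp
qed (simp add: posterior_eq_pmf_bind)

lemma sum_posterior:
  assumes "\<sigma> \<in> supp_sig \<mu> \<pi>"
  shows "(\<Sum>\<omega>\<in>UNIV. posterior \<mu> \<pi> \<sigma> \<omega>) = 1"
proof -
  have "pmf (bind_pmf \<mu> \<pi>) \<sigma> \<noteq> 0"
    using assms unfolding supp_sig_eq_set_bind_pmf set_pmf_iff .
  then show ?thesis
    by (simp add: posterior_def flip: sum_divide_distrib pmf_bind_pmf_finite)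
qed


lemma abs_le_sum_abs_UNIV:
  fixes u :: "'x::finite \<Rightarrow> 'y::finite \<Rightarrow> real"
  shows "\<bar>u x y\<bar> \<le> (\<Sum>x'\<in>UNIV. \<Sum>y'\<in>UNIV. \<bar>u x' y'\<bar>)"
proof -
  have "\<bar>u x y\<bar> \<le> (\<Sum>y'\<in>UNIV. \<bar>u x y'\<bar>)"
    by (rule member_le_sum) auto
  also have "\<dots> \<le> (\<Sum>x'\<in>UNIV. \<Sum>y'\<in>UNIV. \<bar>u x' y'\<bar>)"
    by (rule member_le_sum) (auto intro: sum_nonneg)
  finally show ?thesis .
qed

lemma receiver_utility_eq_sum:
  fixes \<mu> :: "'w::finite pmf" and uR :: "'w \<Rightarrow> 'a::finite \<Rightarrow> real"
  shows "receiver_utility \<mu> uR \<pi> s = (\<Sum>\<omega>\<in>UNIV. pmf \<mu> \<omega> *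
           measure_pmf.expectation (\<pi> \<omega>) (\<lambda>\<sigma>. measure_pmf.expectation (s \<sigma>) (uR \<omega>)))"
proof -
  let ?U = "\<Sum>\<omega>\<in>UNIV. \<Sum>a\<in>UNIV. \<bar>uR \<omega> a\<bar>"
  have U: "\<bar>case x of (\<omega>, a) \<Rightarrow> uR \<omega> a\<bar> \<le> ?U" for x
    by (cases x) (simp add: abs_le_sum_abs_UNIV)
  have "receiver_utility \<mu> uR \<pi> s = measure_pmf.expectation \<mu> (\<lambda>\<omega>.
          measure_pmf.expectation (\<pi> \<omega>) (\<lambda>\<sigma>. measure_pmf.expectation (s \<sigma>) (uR \<omega>)))"
    unfolding receiver_utility_def by (simp add: expectation_bind_pmf_bounded[OF U])
  then show ?thesis
    by (simp only: expectation_finite_UNIV[of \<mu>])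
qed

lemma expectation_posterior_mult:
  fixes \<phi> :: "'sig \<Rightarrow> real"
  shows "measure_pmf.expectation (bind_pmf \<mu> \<pi>) (\<lambda>\<sigma>. posterior \<mu> \<pi> \<sigma> \<omega> * \<phi> \<sigma>)
         = pmf \<mu> \<omega> * measure_pmf.expectation (\<pi> \<omega>) \<phi>"
proof -
  have "measure_pmf.expectation (bind_pmf \<mu> \<pi>) (\<lambda>\<sigma>. posterior \<mu> \<pi> \<sigma> \<omega> * \<phi> \<sigma>)
        = integral\<^sup>L (count_space UNIV) (\<lambda>\<sigma>. pmf \<mu> \<omega> * (pmf (\<pi> \<omega>) \<sigma> * \<phi> \<sigma>))"
    unfolding expectation_eq_count_space
    by (simp add: mult.assoc[symmetric] pmf_bind_mult_posterior)
  then show ?thesis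
    by (simp add: expectation_eq_count_space)
qed

lemma expectation_posterior:
  "measure_pmf.expectation (bind_pmf \<mu> \<pi>) (\<lambda>\<sigma>. posterior \<mu> \<pi> \<sigma> \<omega>) = pmf \<mu> \<omega>"
  using expectation_posterior_mult[where \<phi>="\<lambda>_. 1"] by simp

definition signal_value ::
  "'w::finite pmf \<Rightarrow> ('w \<Rightarrow> 'a \<Rightarrow> real) \<Rightarrow> ('w \<Rightarrow> 'sig pmf) \<Rightarrow> ('sig \<Rightarrow> 'a pmf) \<Rightarrow> 'sig \<Rightarrow> real"
  where "signal_value \<mu> uR \<pi> s \<sigma> =
    (\<Sum>\<omega>\<in>UNIV. posterior \<mu> \<pi> \<sigma> \<omega> * measure_pmf.expectation (s \<sigma>) (uR \<omega>))"

definition belief_point ::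
  "'w::finite pmf \<Rightarrow> ('w \<Rightarrow> 'a \<Rightarrow> real) \<Rightarrow> ('w \<Rightarrow> 'sig pmf) \<Rightarrow> ('sig \<Rightarrow> 'a pmf) \<Rightarrow> 'sig
   \<Rightarrow> (real^'w) \<times> real"
  where "belief_point \<mu> uR \<pi> s \<sigma> = ((\<chi> \<omega>. posterior \<mu> \<pi> \<sigma> \<omega>), signal_value \<mu> uR \<pi> s \<sigma>)"

lemma abs_posterior_mult_le:
  fixes uR :: "'w::finite \<Rightarrow> 'a::finite \<Rightarrow> real"
  shows "\<bar>posterior \<mu> \<pi> \<sigma> \<omega> * measure_pmf.expectation (s \<sigma>) (uR \<omega>)\<bar>
         \<le> (\<Sum>\<omega>\<in>UNIV. \<Sum>a\<in>UNIV. \<bar>uR \<omega> a\<bar>)"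
proof -
  have "\<bar>posterior \<mu> \<pi> \<sigma> \<omega> * measure_pmf.expectation (s \<sigma>) (uR \<omega>)\<bar>
        \<le> 1 * (\<Sum>\<omega>\<in>UNIV. \<Sum>a\<in>UNIV. \<bar>uR \<omega> a\<bar>)"
    unfolding abs_mult abs_of_nonneg[OF posterior_nonneg] using posterior_le_1
    by (intro mult_mono abs_expectation_le abs_le_sum_abs_UNIV) auto
  then show ?thesis
    by simp
qed

lemma abs_signal_value_le:
  fixes uR :: "'w::finite \<Rightarrow> 'a::finite \<Rightarrow> real"
  shows "\<bar>signal_value \<mu> uR \<pi> s \<sigma>\<bar> \<le> CARD('w) * (\<Sum>\<omega>\<in>UNIV. \<Sum>a\<in>UNIV. \<bar>uR \<omega> a\<bar>)"
proof -
  have "\<bar>signal_value \<mu> uR \<pi> s \<sigma>\<bar> \<le> (\<Sum>\<omega>\<in>(UNIV::'w set). \<Sum>\<omega>\<in>UNIV. \<Sum>a\<in>UNIV. \<bar>uR \<omega> a\<bar>)"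
    unfolding signal_value_def by (intro order_trans[OF sum_abs] sum_mono abs_posterior_mult_le)
  then show ?thesis
    by simp
qed

lemma expectation_signal_value:
  fixes \<mu> :: "'w::finite pmf" and uR :: "'w \<Rightarrow> 'a::finite \<Rightarrow> real"
  shows "measure_pmf.expectation (bind_pmf \<mu> \<pi>) (signal_value \<mu> uR \<pi> s) = receiver_utility \<mu> uR \<pi> s"
proof -
  have "integrable (measure_pmf (bind_pmf \<mu> \<pi>))
          (\<lambda>\<sigma>. posterior \<mu> \<pi> \<sigma> \<omega> * measure_pmf.expectation (s \<sigma>) (uR \<omega>))" for \<omega>
    using abs_posterior_mult_le by (rule pmf_integrable_bounded)
  then show ?thesis
    unfolding signal_value_def
    by (simp add: Bochner_Integration.integral_sum expectation_posterior_mult receiver_utility_eq_sum)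
qed

lemma prior_value_in_convex_hull:
  fixes \<mu> :: "'w::finite pmf" and uR :: "'w \<Rightarrow> 'a::finite \<Rightarrow> real"
  shows "((\<chi> \<omega>. pmf \<mu> \<omega>), receiver_utility \<mu> uR \<pi> s)
         \<in> convex hull (belief_point \<mu> uR \<pi> s ` supp_sig \<mu> \<pi>)"
  unfolding supp_sig_eq_set_bind_pmf
proof (rule barycentre_in_convex_hull)
  let ?U = "\<Sum>\<omega>\<in>UNIV. \<Sum>a\<in>UNIV. \<bar>uR \<omega> a\<bar>"
  show "norm (belief_point \<mu> uR \<pi> s \<sigma>) \<le> CARD('w) + CARD('w) * ?U" for \<sigma>
  proof -
    have "norm ((\<chi> \<omega>. posterior \<mu> \<pi> \<sigma> \<omega>) :: real^'w) \<le> (\<Sum>\<omega>\<in>(UNIV::'w set). 1)"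
      using posterior_nonneg posterior_le_1
      by (intro order_trans[OF norm_le_l1_cart] sum_mono) (simp add: abs_of_nonneg[OF posterior_nonneg])
    moreover have "norm (belief_point \<mu> uR \<pi> s \<sigma>)
        \<le> norm ((\<chi> \<omega>. posterior \<mu> \<pi> \<sigma> \<omega>) :: real^'w) + \<bar>signal_value \<mu> uR \<pi> s \<sigma>\<bar>"
      unfolding belief_point_def using norm_Pair_le by (metis real_norm_def)
    ultimately show ?thesis
      using abs_signal_value_le[of \<mu> uR \<pi> s \<sigma>] by simp

  qed
  show "inner a ((\<chi> \<omega>. pmf \<mu> \<omega>), receiver_utility \<mu> uR \<pi> s)
        = measure_pmf.expectation (bind_pmf \<mu> \<pi>) (\<lambda>\<sigma>. inner a (belief_point \<mu> uR \<pi> s \<sigma>))" for a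
  proof -
    obtain \<alpha> \<beta> where a: "a = (\<alpha>, \<beta>)"
      by (cases a)
    have "integrable (measure_pmf (bind_pmf \<mu> \<pi>)) (\<lambda>\<sigma>. posterior \<mu> \<pi> \<sigma> \<omega>)" for \<omega>
      using posterior_le_1
      by (intro pmf_integrable_bounded[where C=1]) (simp add: abs_of_nonneg[OF posterior_nonneg])
    moreover have "integrable (measure_pmf (bind_pmf \<mu> \<pi>)) (signal_value \<mu> uR \<pi> s)"
      using abs_signal_value_le by (rule pmf_integrable_bounded)
    ultimately have "measure_pmf.expectation (bind_pmf \<mu> \<pi>) (\<lambda>\<sigma>. inner a (belief_point \<mu> uR \<pi> s \<sigma>))
        = (\<Sum>\<omega>\<in>UNIV. \<alpha> $ \<omega> * measure_pmf.expectation (bind_pmf \<mu> \<pi>) (\<lambda>\<sigma>. posterior \<mu> \<pi> \<sigma> \<omega>))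
          + \<beta> * measure_pmf.expectation (bind_pmf \<mu> \<pi>) (signal_value \<mu> uR \<pi> s)"
      by (simp add: a belief_point_def inner_vec_def Bochner_Integration.integral_sum)
    then show ?thesis
      by (simp add: a inner_vec_def expectation_posterior expectation_signal_value)
  qed
qed

lemma aff_dim_belief_points:
  fixes \<mu> :: "'w::finite pmf"
  shows "aff_dim (belief_point \<mu> uR \<pi> s ` supp_sig \<mu> \<pi>) \<le> int CARD('w)"
proof -
  define e :: "(real^'w) \<times> real" where "e = ((\<chi> \<omega>. 1), 0)"
  have "e \<noteq> 0"
    by (simp add: e_def vec_eq_iff zero_prod_def)
  have "inner e (belief_point \<mu> uR \<pi> s \<sigma>) = (\<Sum>\<omega>\<in>UNIV. posterior \<mu> \<pi> \<sigma> \<omega>)" for \<sigma>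
    by (simp add: e_def belief_point_def inner_vec_def)
  then have "belief_point \<mu> uR \<pi> s ` supp_sig \<mu> \<pi> \<subseteq> {z. inner e z = 1}"
    using sum_posterior by auto
  then have "aff_dim (belief_point \<mu> uR \<pi> s ` supp_sig \<mu> \<pi>) \<le> aff_dim {z. inner e z = 1}"
    by (rule aff_dim_subset)
  also have "\<dots> = int CARD('w)"
    using \<open>e \<noteq> 0\<close> by simp
  finally show ?thesis .
qed

section \<open>Splitting the prior\<close>

lemma receiver_utility_finite_signals:
  fixes \<mu> :: "'w::finite pmf" and uR :: "'w \<Rightarrow> 'a::finite \<Rightarrow> real"
  assumes "finite T" and "\<And>\<omega> \<sigma>. pmf \<mu> \<omega> \<noteq> 0 \<Longrightarrow> \<sigma> \<in> set_pmf (\<pi> \<omega>) \<Longrightarrow> \<sigma> \<in> T"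
  shows "receiver_utility \<mu> uR \<pi> s = (\<Sum>\<sigma>\<in>T. \<Sum>\<omega>\<in>UNIV.
           pmf \<mu> \<omega> * pmf (\<pi> \<omega>) \<sigma> * measure_pmf.expectation (s \<sigma>) (uR \<omega>))"
proof -
  have "pmf \<mu> \<omega> * measure_pmf.expectation (\<pi> \<omega>) (\<lambda>\<sigma>. measure_pmf.expectation (s \<sigma>) (uR \<omega>))
        = (\<Sum>\<sigma>\<in>T. pmf \<mu> \<omega> * pmf (\<pi> \<omega>) \<sigma> * measure_pmf.expectation (s \<sigma>) (uR \<omega>))" for \<omega>
  proof (cases "pmf \<mu> \<omega> = 0")
    case False
    then have "measure_pmf.expectation (\<pi> \<omega>) (\<lambda>\<sigma>. measure_pmf.expectation (s \<sigma>) (uR \<omega>))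
        = (\<Sum>\<sigma>\<in>T. measure_pmf.expectation (s \<sigma>) (uR \<omega>) * pmf (\<pi> \<omega>) \<sigma>)"
      using assms by (intro integral_measure_pmf_real) auto
    then show ?thesis
      by (simp add: sum_distrib_left mult_ac)
  qed simp
  then show ?thesis
    by (simp add: receiver_utility_eq_sum sum.swap[of _ T])
qed

locale prior_split =
  fixes \<mu> :: "'w::finite pmf" and T :: "'sig set" and q :: "'sig \<Rightarrow> 'w \<Rightarrow> real"
  assumes finite_T: "finite T"
    and q_nonneg: "\<And>\<sigma> \<omega>. \<sigma> \<in> T \<Longrightarrow> 0 \<le> q \<sigma> \<omega>"
    and q_marginal: "\<And>\<omega>. (\<Sum>\<sigma>\<in>T. q \<sigma> \<omega>) = pmf \<mu> \<omega>"
begin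

text \<open>States outside the support of the prior do not affect Bayes' rule, but the sender still
  needs an optimal signal there; they send the default signal \<open>d \<omega>\<close>.\<close>

definition strategy :: "('w \<Rightarrow> 'sig) \<Rightarrow> 'w \<Rightarrow> 'sig pmf" where
  "strategy d \<omega> = (if pmf \<mu> \<omega> = 0 then return_pmf (d \<omega>)
     else embed_pmf (\<lambda>\<sigma>. if \<sigma> \<in> T then q \<sigma> \<omega> / pmf \<mu> \<omega> else 0))"

lemma q_eq_0_if_pmf_eq_0:
  assumes "pmf \<mu> \<omega> = 0" "\<sigma> \<in> T"
  shows "q \<sigma> \<omega> = 0"
  using q_marginal[of \<omega>] assms finite_T q_nonneg by (simp add: sum_nonneg_eq_0_iff)

lemma joint_strategy:
  "pmf \<mu> \<omega> * pmf (strategy d \<omega>) \<sigma> = (if \<sigma> \<in> T then q \<sigma> \<omega> else 0)"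
proof (cases "pmf \<mu> \<omega> = 0")
  case True
  then show ?thesis
    by (simp add: q_eq_0_if_pmf_eq_0)
next
  case False
  let ?f = "\<lambda>\<sigma>. if \<sigma> \<in> T then q \<sigma> \<omega> / pmf \<mu> \<omega> else 0"
  have f_nonneg: "0 \<le> ?f \<sigma>" for \<sigma>
    by (simp add: q_nonneg)
  have "(\<integral>\<^sup>+\<sigma>. ennreal (?f \<sigma>) \<partial>count_space UNIV) = ennreal (\<Sum>\<sigma>\<in>T. q \<sigma> \<omega> / pmf \<mu> \<omega>)"
    using finite_T f_nonneg
    by (subst nn_integral_count_space'[where A=T]) (auto intro!: sum_ennreal simp: q_nonneg)
  also have "\<dots> = 1"
    using False by (simp add: q_marginal flip: sum_divide_distrib)
  finally have "pmf (strategy d \<omega>) \<sigma> = ?f \<sigma>"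
    using False pmf_embed_pmf[of ?f, OF f_nonneg] by (simp add: strategy_def)
  then show ?thesis
    using False by simp
qed

lemma set_strategy:
  assumes "pmf \<mu> \<omega> \<noteq> 0"
  shows "\<sigma> \<in> set_pmf (strategy d \<omega>) \<longleftrightarrow> \<sigma> \<in> T \<and> q \<sigma> \<omega> \<noteq> 0"
proof -
  have "\<sigma> \<in> set_pmf (strategy d \<omega>) \<longleftrightarrow> pmf \<mu> \<omega> * pmf (strategy d \<omega>) \<sigma> \<noteq> 0"
    using assms by (simp add: set_pmf_iff)
  then show ?thesis
    by (simp add: joint_strategy)
qed

definition used_signals :: "'sig set" where
  "used_signals = {\<sigma>\<in>T. \<exists>\<omega>. q \<sigma> \<omega> \<noteq> 0}"

lemma finite_used_signals: "finite used_signals"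
  using finite_T by (simp add: used_signals_def)

lemma used_signals_nonempty: "used_signals \<noteq> {}"
proof -
  obtain \<omega> where "pmf \<mu> \<omega> \<noteq> 0"
    using set_pmf_not_empty[of \<mu>] by (auto simp: set_pmf_iff)
  then obtain \<sigma> where "\<sigma> \<in> T" "q \<sigma> \<omega> \<noteq> 0"
    using q_marginal[of \<omega>] sum.neutral by metis
  then show ?thesis
    by (auto simp: used_signals_def)
qed

lemma supp_sig_strategy: "supp_sig \<mu> (strategy d) = used_signals"
proof (intro set_eqI iffI)
  fix \<sigma> assume "\<sigma> \<in> supp_sig \<mu> (strategy d)"
  then obtain \<omega> where "pmf \<mu> \<omega> \<noteq> 0" "\<sigma> \<in> set_pmf (strategy d \<omega>)"
    by (auto simp: supp_sig_def set_pmf_iff)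
  then show "\<sigma> \<in> used_signals"
    by (auto simp: used_signals_def set_strategy)
next
  fix \<sigma> assume "\<sigma> \<in> used_signals"
  then obtain \<omega> where "\<sigma> \<in> T" "q \<sigma> \<omega> \<noteq> 0"
    by (auto simp: used_signals_def)
  moreover from this have "pmf \<mu> \<omega> \<noteq> 0"
    using q_eq_0_if_pmf_eq_0 by blast
  ultimately have "\<omega> \<in> set_pmf \<mu>" "\<sigma> \<in> set_pmf (strategy d \<omega>)"
    by (simp add: set_pmf_iff, simp add: set_strategy)
  then show "\<sigma> \<in> supp_sig \<mu> (strategy d)"
    by (auto simp: supp_sig_def)
qed

lemma posterior_strategy:
  assumes "\<sigma> \<in> T"
  shows "posterior \<mu> (strategy d) \<sigma> \<omega> = q \<sigma> \<omega> / (\<Sum>\<omega>'\<in>UNIV. q \<sigma> \<omega>')"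
  using assms by (simp add: posterior_def joint_strategy)

lemma receiver_utility_strategy:
  fixes uR :: "'w \<Rightarrow> 'a::finite \<Rightarrow> real"
  shows "receiver_utility \<mu> uR (strategy d) s
         = (\<Sum>\<sigma>\<in>T. \<Sum>\<omega>\<in>UNIV. q \<sigma> \<omega> * measure_pmf.expectation (s \<sigma>) (uR \<omega>))"
  by (subst receiver_utility_finite_signals[OF finite_T])
     (auto simp: set_strategy joint_strategy intro!: sum.cong)

end

section \<open>Equilibria with few signals\<close>

lemma cheap_talk_eq_restrict_signals:
  assumes eq: "cheap_talk_eq \<mu> uS uR \<pi> s"
    and supp: "supp_sig \<mu> \<pi>' \<subseteq> supp_sig \<mu> \<pi>"
    and posterior: "\<And>\<sigma> \<omega>. \<sigma> \<in> supp_sig \<mu> \<pi>' \<Longrightarrow> posterior \<mu> \<pi>' \<sigma> \<omega> = posterior \<mu> \<pi> \<sigma> \<omega>"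
    and sender: "\<And>\<omega> \<sigma>. \<sigma> \<in> set_pmf (\<pi>' \<omega>) \<Longrightarrow> \<sigma> \<in> set_pmf (\<pi> \<omega>) \<or>
                   (\<forall>\<sigma>'\<in>supp_sig \<mu> \<pi>'. sender_util uS s \<omega> \<sigma>' \<le> sender_util uS s \<omega> \<sigma>)"
  shows "cheap_talk_eq \<mu> uS uR \<pi>' s"
  unfolding cheap_talk_eq_def
proof (intro conjI allI impI ballI)
  fix \<omega> \<sigma> \<sigma>'
  assume "\<sigma> \<in> set_pmf (\<pi>' \<omega>)" "\<sigma>' \<in> supp_sig \<mu> \<pi>'"
  then show "sender_util uS s \<omega> \<sigma>' \<le> sender_util uS s \<omega> \<sigma>"
    using sender[of \<sigma> \<omega>] supp eq unfolding cheap_talk_eq_def by blast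
next
  fix \<sigma> a a'
  assume "\<sigma> \<in> supp_sig \<mu> \<pi>'" "a \<in> set_pmf (s \<sigma>)"
  then show "(\<Sum>\<omega>\<in>UNIV. posterior \<mu> \<pi>' \<sigma> \<omega> * uR \<omega> a') \<le> (\<Sum>\<omega>\<in>UNIV. posterior \<mu> \<pi>' \<sigma> \<omega> * uR \<omega> a)"
    using posterior supp eq unfolding cheap_talk_eq_def by (simp add: subset_iff)
qed

lemma finite_maximizer_choice:
  fixes g :: "'x \<Rightarrow> 'y \<Rightarrow> 'b::linorder"
  assumes "finite D" "D \<noteq> {}"
  obtains d where "\<And>x. d x \<in> D" "\<And>x y. y \<in> D \<Longrightarrow> g x y \<le> g x (d x)"
proof -
  have "\<exists>z\<in>D. \<forall>y\<in>D. g x y \<le> g x z" for x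
  proof -
    have "Max (g x ` D) \<in> g x ` D"
      using assms by simp
    then obtain z where "z \<in> D" "g x z = Max (g x ` D)"
      by auto
    then show ?thesis
      using assms(1) by (metis Max_ge finite_imageI imageI)
  qed
  then show ?thesis
    using that by metis
qed

lemma belief_split_components:
  "(\<Sum>\<sigma>\<in>T. w \<sigma> *\<^sub>R belief_point \<mu> uR \<pi> s \<sigma>) = ((\<chi> \<omega>. pmf \<mu> \<omega>), v)
   \<longleftrightarrow> (\<forall>\<omega>. (\<Sum>\<sigma>\<in>T. w \<sigma> * posterior \<mu> \<pi> \<sigma> \<omega>) = pmf \<mu> \<omega>)
       \<and> (\<Sum>\<sigma>\<in>T. w \<sigma> * signal_value \<mu> uR \<pi> s \<sigma>) = v"
  by (simp add: prod_eq_iff vec_eq_iff fst_sum snd_sum belief_point_def)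

locale belief_split =
  fixes \<mu> :: "'w::finite pmf" and \<pi> :: "'w \<Rightarrow> 'sig pmf" and T :: "'sig set" and w :: "'sig \<Rightarrow> real"
  assumes finite_T: "finite T" and T_supp: "T \<subseteq> supp_sig \<mu> \<pi>"
    and w_nonneg: "\<forall>\<sigma>\<in>T. 0 \<le> w \<sigma>"
    and bayes_plausible: "\<And>\<omega>. (\<Sum>\<sigma>\<in>T. w \<sigma> * posterior \<mu> \<pi> \<sigma> \<omega>) = pmf \<mu> \<omega>"
begin

sublocale prior_split \<mu> T "\<lambda>\<sigma> \<omega>. w \<sigma> * posterior \<mu> \<pi> \<sigma> \<omega>"
  using finite_T w_nonneg bayes_plausible by unfold_locales (auto simp: posterior_nonneg)

lemma posterior_strategy_eq:
  assumes "\<sigma> \<in> supp_sig \<mu> (strategy d)"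
  shows "posterior \<mu> (strategy d) \<sigma> \<omega> = posterior \<mu> \<pi> \<sigma> \<omega>"
proof -
  have "\<sigma> \<in> T" "w \<sigma> \<noteq> 0"
    using assms by (auto simp: supp_sig_strategy used_signals_def)
  moreover have "(\<Sum>\<omega>'\<in>UNIV. w \<sigma> * posterior \<mu> \<pi> \<sigma> \<omega>') = w \<sigma>"
    using sum_posterior[of \<sigma> \<mu> \<pi>] T_supp \<open>\<sigma> \<in> T\<close> by (auto simp flip: sum_distrib_left)
  ultimately show ?thesis
    by (simp add: posterior_strategy)
qed

lemma set_strategy_subset:
  assumes "pmf \<mu> \<omega> \<noteq> 0"
  shows "set_pmf (strategy d \<omega>) \<subseteq> set_pmf (\<pi> \<omega>)"
proof
  fix \<sigma> assume "\<sigma> \<in> set_pmf (strategy d \<omega>)"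
  then have "posterior \<mu> \<pi> \<sigma> \<omega> \<noteq> 0"
    using assms by (simp add: set_strategy)
  then show "\<sigma> \<in> set_pmf (\<pi> \<omega>)"
    by (auto simp: posterior_eq_pmf_bind set_pmf_iff)
qed

lemma receiver_utility_strategy_eq:
  fixes uR :: "'w \<Rightarrow> 'a::finite \<Rightarrow> real"
  shows "receiver_utility \<mu> uR (strategy d) s = (\<Sum>\<sigma>\<in>T. w \<sigma> * signal_value \<mu> uR \<pi> s \<sigma>)"
  by (simp add: receiver_utility_strategy signal_value_def sum_distrib_left mult.assoc)

end

lemma small_equilibrium_from_split:
  fixes \<mu> :: "'w::finite pmf" and uR :: "'w \<Rightarrow> 'a::finite \<Rightarrow> real"
  assumes eq: "cheap_talk_eq \<mu> uS uR \<pi> s"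
    and T: "finite T" "T \<subseteq> supp_sig \<mu> \<pi>" and w: "\<forall>\<sigma>\<in>T. 0 \<le> w \<sigma>"
    and splitting: "(\<Sum>\<sigma>\<in>T. w \<sigma> *\<^sub>R belief_point \<mu> uR \<pi> s \<sigma>) = ((\<chi> \<omega>. pmf \<mu> \<omega>), v)"
  shows "\<exists>\<pi>'. cheap_talk_eq \<mu> uS uR \<pi>' s \<and> supp_sig \<mu> \<pi>' \<subseteq> T \<and> receiver_utility \<mu> uR \<pi>' s = v"
proof -
  interpret belief_split \<mu> \<pi> T w
    using T w splitting by unfold_locales (simp_all add: belief_split_components)
  obtain d where d: "\<And>\<omega>. d \<omega> \<in> used_signals"
    "\<And>\<omega> \<sigma>. \<sigma> \<in> used_signals \<Longrightarrow> sender_util uS s \<omega> \<sigma> \<le> sender_util uS s \<omega> (d \<omega>)"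
    using finite_maximizer_choice[OF finite_used_signals used_signals_nonempty] by blast
  have "cheap_talk_eq \<mu> uS uR (strategy d) s"
  proof (rule cheap_talk_eq_restrict_signals[OF eq])
    show "supp_sig \<mu> (strategy d) \<subseteq> supp_sig \<mu> \<pi>"
      using T_supp by (auto simp: supp_sig_strategy used_signals_def)
    show "posterior \<mu> (strategy d) \<sigma> \<omega> = posterior \<mu> \<pi> \<sigma> \<omega>"
      if "\<sigma> \<in> supp_sig \<mu> (strategy d)" for \<sigma> \<omega>
      using that by (rule posterior_strategy_eq)
    show "\<sigma> \<in> set_pmf (\<pi> \<omega>) \<or>
          (\<forall>\<sigma>'\<in>supp_sig \<mu> (strategy d). sender_util uS s \<omega> \<sigma>' \<le> sender_util uS s \<omega> \<sigma>)"
      if "\<sigma> \<in> set_pmf (strategy d \<omega>)" for \<omega> \<sigma>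
      using that d set_strategy_subset[of \<omega> d]
      by (cases "pmf \<mu> \<omega> = 0") (auto simp: strategy_def supp_sig_strategy)
  qed
  moreover have "receiver_utility \<mu> uR (strategy d) s = v"
    using splitting by (simp add: receiver_utility_strategy_eq belief_split_components)
  ultimately show ?thesis
    by (auto simp: supp_sig_strategy used_signals_def)
qed

theorem mainTheorem9:
  fixes \<mu> :: "'w::finite pmf"
    and uS uR :: "'w \<Rightarrow> 'a::finite \<Rightarrow> real"
    and v :: real
  assumes sig_size: "infinite (UNIV :: 'sig set) \<or> CARD('w) + 1 \<le> CARD('sig)"
    and achieved: "\<exists>(\<pi> :: 'w \<Rightarrow> 'sig pmf) (s :: 'sig \<Rightarrow> 'a pmf).
                     cheap_talk_eq \<mu> uS uR \<pi> s \<and> receiver_utility \<mu> uR \<pi> s = v"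
  shows "\<exists>(\<pi> :: 'w \<Rightarrow> 'sig pmf) (s :: 'sig \<Rightarrow> 'a pmf).
           cheap_talk_eq \<mu> uS uR \<pi> s \<and>
           finite (supp_sig \<mu> \<pi>) \<and> card (supp_sig \<mu> \<pi>) \<le> CARD('w) + 1 \<and>
           receiver_utility \<mu> uR \<pi> s = v"
proof -
  obtain \<pi> :: "'w \<Rightarrow> 'sig pmf" and s :: "'sig \<Rightarrow> 'a pmf"
    where eq: "cheap_talk_eq \<mu> uS uR \<pi> s" and utility: "receiver_utility \<mu> uR \<pi> s = v"
    using achieved by blast
  obtain T w where T: "finite T" "T \<subseteq> supp_sig \<mu> \<pi>"
      "int (card T) \<le> aff_dim (belief_point \<mu> uR \<pi> s ` supp_sig \<mu> \<pi>) + 1"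
    and w: "\<forall>\<sigma>\<in>T. 0 \<le> w \<sigma>"
    and splitting: "(\<Sum>\<sigma>\<in>T. w \<sigma> *\<^sub>R belief_point \<mu> uR \<pi> s \<sigma>) = ((\<chi> \<omega>. pmf \<mu> \<omega>), v)"
    using prior_value_in_convex_hull[of \<mu> uR \<pi> s] unfolding utility
    by (rule convex_hull_image_weights) blast
  obtain \<pi>' where eq': "cheap_talk_eq \<mu> uS uR \<pi>' s" and supp: "supp_sig \<mu> \<pi>' \<subseteq> T"
    and utility': "receiver_utility \<mu> uR \<pi>' s = v"
    using small_equilibrium_from_split[OF eq T(1,2) w splitting] by blast
  have "card (supp_sig \<mu> \<pi>') \<le> CARD('w) + 1"
    using card_mono[OF T(1) supp] T(3) aff_dim_belief_points[of \<mu> uR \<pi> s] by linarith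
  then show ?thesis
    using eq' supp utility' finite_subset[OF supp T(1)] by blast
qed

end
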